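(* Let $H$ be a finite dimensional $G$-graded $G$-module. For all $b\in B_n$, $x\in(H^\ast)^{\otimes n}$ and $v\in H^{\otimes n}$, $(b\cdot x)(v)=x(r(b)\cdot v)$.
   Context: $G$ finite group. A $G$-graded $G$-module is $H=\bigoplus_{m\in G}H_m$ with a $G$-action satisfying $\gamma H_m=H_{\gamma m\gamma^{-1}}$. $H^\ast$ is a $G$-graded $G$-module via $(\gamma x)(v)=x(\gamma^{-1}v)$ and $(H^\ast)_m=(H_{m^{-1}})^\ast$. For any $G$-graded $G$-module $V$, $B_n$ (generators $b_1,\dots,b_{n-1}$) acts on $V^{\otimes n}$ by $b_i(v_1\otimes\cdots\otimes v_n)=v_1\otimes\cdots\otimes(\gamma_iv_{i+1})\otimes v_i\otimes\cdots\otimes v_n$ for $v_j\in V_{\gamma_j}$; this is applied to both $V=H$ and $V=H^\ast$. The pairing of $(H^\ast)^{\otimes n}$ with $H^{\otimes n}$ is $(x_1\otimes\cdots\otimes x_n)(v_1\otimes\cdots\otimes v_n)=x_n(v_1)x_{n-1}(v_2)\cdots x_1(v_n)$. The reflection $r:B_n\to B_n$ is the antihomomorphism with $r(b_i)=b_{n-i}$. *)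

theory Defs
  imports Complex_Main "HOL-Algebra.Group"
begin

text \<open>Braid group words: an element of B_n is represented by a word in the
generators b_i (i, True) and their inverses (i, False), 1 \<le> i \<le> n - 1.
The word [g1, ..., gk] stands for the product g1 g2 ... gk.\<close>

type_synonym bword = "(nat \<times> bool) list"

definition braid_word :: "nat \<Rightarrow> bword \<Rightarrow> bool" where
  "braid_word n w \<longleftrightarrow> (\<forall>(i, s) \<in> set w. 1 \<le> i \<and> i < n)"

definition brefl :: "nat \<Rightarrow> bword \<Rightarrow> bword" where
  "brefl n w = rev (map (\<lambda>(i, s). (n - i, s)) w)"

text \<open>A homogeneous pure tensor v_1 \<otimes> ... \<otimes> v_n of a G-graded G-module
is a list of pairs (gamma_j, v_j) with v_j of degree gamma_j.
Action of b_i (positions i, i+1, 1-indexed):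
 v_i \<otimes> v_(i+1) \<mapsto> (gamma_i v_(i+1)) \<otimes> v_i, the new degrees being
 gamma_i gamma_(i+1) gamma_i^-1 and gamma_i.\<close>
definition bgen :: "('g, 'm) monoid_scheme \<Rightarrow> ('g \<Rightarrow> 'a \<Rightarrow> 'a) \<Rightarrow> nat
    \<Rightarrow> ('g \<times> 'a) list \<Rightarrow> ('g \<times> 'a) list" where
  "bgen G act i t =
     (let (g1, v1) = t ! (i - 1); (g2, v2) = t ! i
      in t[i - 1 := (g1 \<otimes>\<^bsub>G\<^esub> g2 \<otimes>\<^bsub>G\<^esub> inv\<^bsub>G\<^esub> g1, act g1 v2), i := (g1, v1)])"

text \<open>Action of b_i^-1 (the inverse of the map above):
 v_i \<otimes> v_(i+1) \<mapsto> v_(i+1) \<otimes> (gamma_(i+1)^-1 v_i).\<close>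
definition bgen_inv :: "('g, 'm) monoid_scheme \<Rightarrow> ('g \<Rightarrow> 'a \<Rightarrow> 'a) \<Rightarrow> nat
    \<Rightarrow> ('g \<times> 'a) list \<Rightarrow> ('g \<times> 'a) list" where
  "bgen_inv G act i t =
     (let (g1, v1) = t ! (i - 1); (g2, v2) = t ! i
      in t[i - 1 := (g2, v2), i := (inv\<^bsub>G\<^esub> g2 \<otimes>\<^bsub>G\<^esub> g1 \<otimes>\<^bsub>G\<^esub> g2, act (inv\<^bsub>G\<^esub> g2) v1)])"

text \<open>Action of a braid word on a homogeneous pure tensor (rightmost letter acts first).\<close>
definition bact :: "('g, 'm) monoid_scheme \<Rightarrow> ('g \<Rightarrow> 'a \<Rightarrow> 'a) \<Rightarrow> bword
    \<Rightarrow> ('g \<times> 'a) list \<Rightarrow> ('g \<times> 'a) list" where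
  "bact G act w t = foldr (\<lambda>(i, s) u. if s then bgen G act i u else bgen_inv G act i u) w t"

text \<open>General elements of V^{\<otimes> n}: finite linear combinations of homogeneous
pure tensors; the braid action is extended linearly.\<close>
type_synonym ('k, 'g, 'a) tens = "('k \<times> ('g \<times> 'a) list) list"

definition tact :: "('g, 'm) monoid_scheme \<Rightarrow> ('g \<Rightarrow> 'a \<Rightarrow> 'a) \<Rightarrow> bword
    \<Rightarrow> ('k, 'g, 'a) tens \<Rightarrow> ('k, 'g, 'a) tens" where
  "tact G act w X = map (\<lambda>(c, t). (c, bact G act w t)) X"

definition homog_tensor :: "nat \<Rightarrow> 'g set \<Rightarrow> ('g \<Rightarrow> 'a set) \<Rightarrow> ('k, 'g, 'a) tens \<Rightarrow> bool" where
  "homog_tensor n Gc D X \<longleftrightarrow>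
     (\<forall>(c, t) \<in> set X. length t = n \<and> (\<forall>(g, v) \<in> set t. g \<in> Gc \<and> v \<in> D g))"

text \<open>The dual G-graded G-module H^*: linear functionals, (gamma x)(v) = x(gamma^-1 v),
and (H^*)_m = (H_(m^-1))^*, i.e. functionals vanishing on all H_m' with m' \<noteq> m^-1.\<close>
definition dual_act :: "('g, 'm) monoid_scheme \<Rightarrow> ('g \<Rightarrow> 'v \<Rightarrow> 'v) \<Rightarrow> 'g
    \<Rightarrow> ('v \<Rightarrow> 'k) \<Rightarrow> ('v \<Rightarrow> 'k)" where
  "dual_act G act g x = (\<lambda>v. x (act (inv\<^bsub>G\<^esub> g) v))"

definition dual_deg :: "('g, 'm) monoid_scheme \<Rightarrow> ('k::field \<Rightarrow> 'v::ab_group_add \<Rightarrow> 'v)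
    \<Rightarrow> ('g \<Rightarrow> 'v set) \<Rightarrow> 'g \<Rightarrow> ('v \<Rightarrow> 'k) set" where
  "dual_deg G scale Hd m =
     {x. Vector_Spaces.linear scale (*) x \<and>
         (\<forall>m' \<in> carrier G. m' \<noteq> inv\<^bsub>G\<^esub> m \<longrightarrow> (\<forall>v \<in> Hd m'. x v = 0))}"

definition pure_pair :: "('g \<times> ('v \<Rightarrow> 'k::comm_ring_1)) list \<Rightarrow> ('g \<times> 'v) list \<Rightarrow> 'k" where
  "pure_pair xs vs = (\<Prod>j < length vs. snd (rev xs ! j) (snd (vs ! j)))"

definition tpair :: "('k::comm_ring_1, 'g, 'v \<Rightarrow> 'k) tens \<Rightarrow> ('k, 'g, 'v) tens \<Rightarrow> 'k" where
  "tpair X V = (\<Sum>(c, xs) \<leftarrow> X. \<Sum>(d, vs) \<leftarrow> V. c * d * pure_pair xs vs)"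

end

theory Submission
  imports Defs
begin

text \<open>The pairing matches the j-th factor of H^{\<otimes>n} with the (n+1-j)-th factor of
(H^*)^{\<otimes>n}, so a generator b_i acting on the dual side touches exactly the two factors that
b_(n-i) touches on H. For these two factors the contributions x_1(v_1) x_2(gamma^-1 v_2) and
x_2(delta v_2) x_1(v_1) agree, because x_1(v_1) vanishes unless the degree delta of v_1 is the
inverse of the degree gamma of x_1. Induction on the braid word finishes the proof, the letters
being consumed in opposite orders since r is an antihomomorphism.\<close>

definition graded_action :: "('g, 'm) monoid_scheme \<Rightarrow> ('g \<Rightarrow> 'a \<Rightarrow> 'a) \<Rightarrow> ('g \<Rightarrow> 'a set) \<Rightarrow> bool" where
  "graded_action G act D \<longleftrightarrow>
     (\<forall>g \<in> carrier G. \<forall>m \<in> carrier G. \<forall>v \<in> D m. act g v \<in> D (g \<otimes>\<^bsub>G\<^esub> m \<otimes>\<^bsub>G\<^esub> inv\<^bsub>G\<^esub> g))"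

definition homog_pure :: "nat \<Rightarrow> 'g set \<Rightarrow> ('g \<Rightarrow> 'a set) \<Rightarrow> ('g \<times> 'a) list \<Rightarrow> bool" where
  "homog_pure n Gc D t \<longleftrightarrow> length t = n \<and> (\<forall>(g, v) \<in> set t. g \<in> Gc \<and> v \<in> D g)"

definition dual_vanish :: "('g, 'm) monoid_scheme \<Rightarrow> ('g \<Rightarrow> 'v set) \<Rightarrow> 'g \<Rightarrow> ('v \<Rightarrow> 'k::zero) set" where
  "dual_vanish G Hd m = {x. \<forall>m' \<in> carrier G. m' \<noteq> inv\<^bsub>G\<^esub> m \<longrightarrow> (\<forall>v \<in> Hd m'. x v = 0)}"

lemma homog_tensor_iff_homog_pure:
  "homog_tensor n Gc D X \<longleftrightarrow> (\<forall>(c, t) \<in> set X. homog_pure n Gc D t)"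
  by (simp add: homog_tensor_def homog_pure_def)

lemma dual_deg_subset_dual_vanish: "dual_deg G scale Hd m \<subseteq> dual_vanish G Hd m"
  by (auto simp: dual_deg_def dual_vanish_def)

lemma homog_pure_mono: "homog_pure n Gc D t \<Longrightarrow> (\<And>g. D g \<subseteq> D' g) \<Longrightarrow> homog_pure n Gc D' t"
  by (fastforce simp: homog_pure_def)

lemma prod_lessThan_cong_two:
  fixes f g :: "nat \<Rightarrow> 'k::comm_monoid_mult"
  assumes "p < n" "q < n" "p \<noteq> q" "\<And>j. j < n \<Longrightarrow> j \<noteq> p \<Longrightarrow> j \<noteq> q \<Longrightarrow> f j = g j"
    and "f p * f q = g p * g q"
  shows "(\<Prod>j<n. f j) = (\<Prod>j<n. g j)"
proof -
  have split: "{..<n} = insert p (insert q ({..<n} - {p, q}))" using assms by auto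
  have "(\<Prod>j<n. f j) = f p * f q * (\<Prod>j\<in>{..<n} - {p, q}. f j)"
    by (subst split) (simp add: assms(3) mult.assoc)
  also have "(\<Prod>j\<in>{..<n} - {p, q}. f j) = (\<Prod>j\<in>{..<n} - {p, q}. g j)"
    by (rule prod.cong) (auto intro: assms(4))
  also have "f p * f q * (\<Prod>j\<in>{..<n} - {p, q}. g j) = (\<Prod>j<n. g j)"
    by (subst (2) split) (simp add: assms(3,5) mult.assoc)
  finally show ?thesis .
qed

lemma tpair_tact_eq:
  assumes "\<And>c xs d vs. (c, xs) \<in> set X \<Longrightarrow> (d, vs) \<in> set V \<Longrightarrow> pure_pair (f xs) vs = pure_pair xs (g vs)"
  shows "tpair (map (\<lambda>(c, t). (c, f t)) X) V = tpair X (map (\<lambda>(c, t). (c, g t)) V)"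
  unfolding tpair_def map_map comp_def case_prod_unfold
  by (intro arg_cong[where f = sum_list] map_cong refl) (auto simp: assms)

context group
begin

lemma inv_conj_eq_invD:
  assumes "g \<in> carrier G" "m \<in> carrier G" "m' \<in> carrier G" "inv g \<otimes> m' \<otimes> g = inv m"
  shows "m' = inv (g \<otimes> m \<otimes> inv g)"
proof -
  have "m' = g \<otimes> (inv g \<otimes> m' \<otimes> g) \<otimes> inv g"
    using assms(1,3) by (simp add: m_assoc[symmetric]) (simp add: m_assoc)
  also have "\<dots> = inv (g \<otimes> m \<otimes> inv g)"
    using assms by (simp add: inv_mult_group m_assoc)
  finally show ?thesis .
qed

lemma dual_act_graded:
  assumes "graded_action G act Hd"
  shows "graded_action G (dual_act G act) (dual_vanish G Hd)"
  unfolding graded_action_def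
proof (intro ballI)
  fix g m x assume g: "g \<in> carrier G" and m: "m \<in> carrier G" and x: "x \<in> dual_vanish G Hd m"
  have "dual_act G act g x v = 0"
    if m': "m' \<in> carrier G" "m' \<noteq> inv (g \<otimes> m \<otimes> inv g)" and v: "v \<in> Hd m'" for m' v
  proof -
    have "act (inv g) v \<in> Hd (inv g \<otimes> m' \<otimes> g)"
      using assms g m' v unfolding graded_action_def by (metis inv_closed inv_inv)
    moreover have "inv g \<otimes> m' \<otimes> g \<noteq> inv m"
      using inv_conj_eq_invD g m m' by blast
    ultimately show ?thesis
      using x g m'(1) by (auto simp: dual_act_def dual_vanish_def)
  qed
  then show "dual_act G act g x \<in> dual_vanish G Hd (g \<otimes> m \<otimes> inv g)"
    by (simp add: dual_vanish_def)
qed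

lemma homog_pure_bgen:
  assumes act: "graded_action G act D" and t: "homog_pure n (carrier G) D t" and i: "1 \<le> i" "i < n"
  shows "homog_pure n (carrier G) D (bgen G act i t)"
    and "homog_pure n (carrier G) D (bgen_inv G act i t)"
proof -
  obtain g1 v1 g2 v2 where e1: "t ! (i - 1) = (g1, v1)" and e2: "t ! i = (g2, v2)" by fastforce
  have "t ! (i - 1) \<in> set t" "t ! i \<in> set t" using t i by (auto simp: homog_pure_def)
  then have g: "g1 \<in> carrier G" "g2 \<in> carrier G" and v: "v1 \<in> D g1" "v2 \<in> D g2"
    using t e1 e2 by (auto simp: homog_pure_def)
  have "act g1 v2 \<in> D (g1 \<otimes> g2 \<otimes> inv g1)" "act (inv g2) v1 \<in> D (inv g2 \<otimes> g1 \<otimes> g2)"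
    using act g v unfolding graded_action_def by (metis inv_closed inv_inv)+
  moreover have "set (t[j := p, k := q]) \<subseteq> insert p (insert q (set t))" for j k p q
    by (metis set_update_subset_insert insert_mono insert_commute subset_trans)
  ultimately show "homog_pure n (carrier G) D (bgen G act i t)"
    and "homog_pure n (carrier G) D (bgen_inv G act i t)"
    using t g v e1 e2 unfolding homog_pure_def bgen_def bgen_inv_def by (fastforce split: prod.splits)+
qed

lemma homog_pure_bact:
  assumes "graded_action G act D" "braid_word n w" "homog_pure n (carrier G) D t"
  shows "homog_pure n (carrier G) D (bact G act w t)"
  using assms(2,3)
proof (induction w)
  case Nil
  then show ?case by (simp add: bact_def)
next
  case (Cons a w)
  obtain i s where a: "a = (i, s)" by fastforce
  have "braid_word n w" "1 \<le> i" "i < n" using Cons.prems(1) a by (auto simp: braid_word_def)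
  with Cons homog_pure_bgen[OF assms(1)] show ?case
    using a by (cases s) (simp_all add: bact_def)
qed

lemma pure_pair_bgen:
  fixes xs :: "('a \<times> ('v \<Rightarrow> 'k::comm_ring_1)) list"
  assumes xs: "homog_pure n (carrier G) (dual_vanish G Hd) xs" and vs: "homog_pure n (carrier G) Hd vs"
    and i: "1 \<le> i" "i < n"
  shows "pure_pair (bgen G (dual_act G act) i xs) vs = pure_pair xs (bgen G act (n - i) vs)"
proof -
  define k where "k = n - i"
  obtain a x1 b x2 where ea: "xs ! (i - 1) = (a, x1)" and eb: "xs ! i = (b, x2)" by fastforce
  obtain c v1 d v2 where ec: "vs ! (k - 1) = (c, v1)" and ed: "vs ! k = (d, v2)" by fastforce
  have len: "length xs = n" "length vs = n" using xs vs by (simp_all add: homog_pure_def)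
  have "xs ! (i - 1) \<in> set xs" "vs ! (k - 1) \<in> set vs" using len i by (auto simp: k_def)
  then have "c \<noteq> inv a \<Longrightarrow> x1 v1 = 0"
    using xs vs ea ec by (fastforce simp: homog_pure_def dual_vanish_def)
  then have key: "x1 v1 * x2 (act (inv a) v2) = x2 (act c v2) * x1 v1"
    by (cases "c = inv a") simp_all
  have bgen_eqs: "bgen G (dual_act G act) i xs = xs[i - 1 := (a \<otimes> b \<otimes> inv a, dual_act G act a x2), i := (a, x1)]"
    "bgen G act k vs = vs[k - 1 := (c \<otimes> d \<otimes> inv c, act c v2), k := (c, v1)]"
    using ea eb ec ed by (simp_all add: bgen_def)
  show ?thesis
    unfolding pure_pair_def k_def[symmetric] bgen_eqs length_list_update len
    by (intro prod_lessThan_cong_two[where p = "k - 1" and q = k])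
      (use i len ea eb ec ed key in \<open>auto simp: k_def dual_act_def rev_nth nth_list_update\<close>)
qed

lemma pure_pair_bgen_inv:
  fixes xs :: "('a \<times> ('v \<Rightarrow> 'k::comm_ring_1)) list"
  assumes xs: "homog_pure n (carrier G) (dual_vanish G Hd) xs" and vs: "homog_pure n (carrier G) Hd vs"
    and i: "1 \<le> i" "i < n"
  shows "pure_pair (bgen_inv G (dual_act G act) i xs) vs = pure_pair xs (bgen_inv G act (n - i) vs)"
proof -
  define k where "k = n - i"
  obtain a x1 b x2 where ea: "xs ! (i - 1) = (a, x1)" and eb: "xs ! i = (b, x2)" by fastforce
  obtain c v1 d v2 where ec: "vs ! (k - 1) = (c, v1)" and ed: "vs ! k = (d, v2)" by fastforce
  have len: "length xs = n" "length vs = n" using xs vs by (simp_all add: homog_pure_def)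
  have "xs ! i \<in> set xs" "vs ! k \<in> set vs" using len i by (auto simp: k_def)
  then have "d \<noteq> inv b \<Longrightarrow> x2 v2 = 0"
    using xs vs eb ed by (fastforce simp: homog_pure_def dual_vanish_def)
  then have key: "x1 (act (inv (inv b)) v1) * x2 v2 = x2 v2 * x1 (act (inv d) v1)"
    by (cases "d = inv b") simp_all
  have bgen_inv_eqs:
    "bgen_inv G (dual_act G act) i xs = xs[i - 1 := (b, x2), i := (inv b \<otimes> a \<otimes> b, dual_act G act (inv b) x1)]"
    "bgen_inv G act k vs = vs[k - 1 := (d, v2), k := (inv d \<otimes> c \<otimes> d, act (inv d) v1)]"
    using ea eb ec ed by (simp_all add: bgen_inv_def)
  show ?thesis
    unfolding pure_pair_def k_def[symmetric] bgen_inv_eqs length_list_update len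
    by (intro prod_lessThan_cong_two[where p = "k - 1" and q = k])
      (use i len ea eb ec ed key in \<open>auto simp: k_def dual_act_def rev_nth nth_list_update\<close>)
qed

lemma pure_pair_bact:
  fixes xs :: "('a \<times> ('v \<Rightarrow> 'k::comm_ring_1)) list"
  assumes act: "graded_action G act Hd" and w: "braid_word n w"
    and xs: "homog_pure n (carrier G) (dual_vanish G Hd) xs" and vs: "homog_pure n (carrier G) Hd vs"
  shows "pure_pair (bact G (dual_act G act) w xs) vs = pure_pair xs (bact G act (brefl n w) vs)"
  using w vs
proof (induction w arbitrary: vs)
  case Nil
  then show ?case by (simp add: bact_def brefl_def)
next
  case (Cons a w)
  obtain i s where a: "a = (i, s)" by fastforce
  have w: "braid_word n w" and i: "1 \<le> i" "i < n" using Cons.prems(1) a by (auto simp: braid_word_def)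
  have xs': "homog_pure n (carrier G) (dual_vanish G Hd) (bact G (dual_act G act) w xs)"
    using homog_pure_bact[OF dual_act_graded[OF act] w xs] .
  have vs': "homog_pure n (carrier G) Hd (bgen G act (n - i) vs)"
    "homog_pure n (carrier G) Hd (bgen_inv G act (n - i) vs)"
    using homog_pure_bgen[OF act Cons.prems(2)] i by simp_all
  have refl: "brefl n (a # w) = brefl n w @ [(n - i, s)]"
    by (simp add: brefl_def a)
  show ?case
  proof (cases s)
    case True
    have "pure_pair (bact G (dual_act G act) (a # w) xs) vs
        = pure_pair (bact G (dual_act G act) w xs) (bgen G act (n - i) vs)"
      using pure_pair_bgen[OF xs' Cons.prems(2) i] by (simp add: bact_def a True)
    also have "\<dots> = pure_pair xs (bact G act (brefl n (a # w)) vs)"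
      using Cons.IH[OF w vs'(1)] by (simp add: refl bact_def True)
    finally show ?thesis .
  next
    case False
    have "pure_pair (bact G (dual_act G act) (a # w) xs) vs
        = pure_pair (bact G (dual_act G act) w xs) (bgen_inv G act (n - i) vs)"
      using pure_pair_bgen_inv[OF xs' Cons.prems(2) i] by (simp add: bact_def a False)
    also have "\<dots> = pure_pair xs (bact G act (brefl n (a # w)) vs)"
      using Cons.IH[OF w vs'(2)] by (simp add: refl bact_def False)
    finally show ?thesis .
  qed
qed

end

theorem proposition2p37:
  fixes G :: "('g, 'm) monoid_scheme"
    and scale :: "'k::field \<Rightarrow> 'v::ab_group_add \<Rightarrow> 'v"
    and act :: "'g \<Rightarrow> 'v \<Rightarrow> 'v"
    and Hd :: "'g \<Rightarrow> 'v set"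
    and n :: nat and w :: bword
    and X :: "('k, 'g, 'v \<Rightarrow> 'k) tens" and V :: "('k, 'g, 'v) tens"
  assumes "group G" and "finite (carrier G)"
    and "\<exists>B. finite_dimensional_vector_space scale B"
    and "\<forall>m \<in> carrier G. module.subspace scale (Hd m)"
    and "\<forall>v. \<exists>!f. (\<forall>m \<in> carrier G. f m \<in> Hd m) \<and> (\<forall>m. m \<notin> carrier G \<longrightarrow> f m = 0)
                 \<and> v = (\<Sum>m \<in> carrier G. f m)"
    and "\<forall>g \<in> carrier G. Vector_Spaces.linear scale scale (act g)"
    and "\<forall>v. act \<one>\<^bsub>G\<^esub> v = v"
    and "\<forall>g \<in> carrier G. \<forall>h \<in> carrier G. \<forall>v. act (g \<otimes>\<^bsub>G\<^esub> h) v = act g (act h v)"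
    and "\<forall>g \<in> carrier G. \<forall>m \<in> carrier G. act g ` Hd m = Hd (g \<otimes>\<^bsub>G\<^esub> m \<otimes>\<^bsub>G\<^esub> inv\<^bsub>G\<^esub> g)"
    and "braid_word n w"
    and "homog_tensor n (carrier G) (dual_deg G scale Hd) X"
    and "homog_tensor n (carrier G) Hd V"
  shows "tpair (tact G (dual_act G act) w X) V = tpair X (tact G act (brefl n w) V)"
proof -
  have act: "graded_action G act Hd"
    using assms(9) by (auto simp: graded_action_def)
  have "pure_pair (bact G (dual_act G act) w xs) vs = pure_pair xs (bact G act (brefl n w) vs)"
    if "(c, xs) \<in> set X" "(d, vs) \<in> set V" for c xs d vs
  proof (rule group.pure_pair_bact[OF assms(1) act assms(10)])
    show "homog_pure n (carrier G) (dual_vanish G Hd) xs"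
      using assms(11) that(1) dual_deg_subset_dual_vanish
      by (fastforce simp: homog_tensor_iff_homog_pure intro: homog_pure_mono)
    show "homog_pure n (carrier G) Hd vs"
      using assms(12) that(2) by (fastforce simp: homog_tensor_iff_homog_pure)
  qed
  then show ?thesis
    unfolding tact_def by (rule tpair_tact_eq)
qed

end
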